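(* Let $q=p^m$ be a prime power and let $J_{\mathbb{F}_q}$ be the group of unitaries on $\mathbb{C}^q$ generated by $F$, $P_\gamma$ and $M_\gamma$ for all $\gamma\in\mathbb{F}_q\setminus\{0\}$. Then $J_{\mathbb{F}_q}$ acts by conjugation transitively on the non-trivial elements of $\mathcal{G}_1/\langle\omega I\rangle$: for any $(\alpha,\beta),(\alpha',\beta')\in\mathbb{F}_q^2\setminus\{(0,0)\}$ there is $U\in J_{\mathbb{F}_q}$ such that $U^{-1}X_\alpha Z_\beta U$ is a scalar multiple of $X_{\alpha'}Z_{\beta'}$.
   Context: Let $\omega=\exp(2\pi i/p)$ and $\mathrm{tr}(\alpha)=\sum_{k=0}^{m-1}\alpha^{p^k}\in\mathbb{F}_p$ (identified with $\mathbb{Z}/p\mathbb{Z}$ in exponents of $\omega$). On $\mathbb{C}^q$ with orthonormal basis $\{|x\rangle:x\in\mathbb{F}_q\}$ define $X_\alpha=\sum_x|x+\alpha\rangle\langle x|$, $Z_\beta=\sum_z\omega^{\mathrm{tr}(\beta z)}|z\rangle\langle z|$, $M_\gamma=\sum_y|\gamma y\rangle\langle y|$ ($\gamma\neq0$), $F=\frac1{\sqrt q}\sum_{x,z}\omega^{\mathrm{tr}(xz)}|z\rangle\langle x|$. The error group $\mathcal{G}_1$ is the group generated by all $X_\alpha Z_\beta$, with center $\langle\omega I\rangle$. For $q$ odd, $P_\gamma=\sum_y\omega^{-\mathrm{tr}(\frac12\gamma y^2)}|y\rangle\langle y|$. For $q=2^m$, fix a self-dual basis $\{b_1,\dots,b_m\}$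 of $\mathbb{F}_q$ over $\mathbb{F}_2$ ($\mathrm{tr}(b_ib_j)=\delta_{ij}$), let $\mathrm{wgt}(y)=|\{j:\mathrm{tr}(yb_j)\ne0\}|$, $P_1=\sum_y(-i)^{\mathrm{wgt}(y)}|y\rangle\langle y|$, and $P_\gamma=M_{\gamma_0}^{-1}P_1M_{\gamma_0}$ where $\gamma_0^2=\gamma$. *)

theory Defs
  imports "HOL-Analysis.Analysis"
begin

text \<open>Throughout, 'a is a finite field F_q with q = p^m, p prime.
  Operators on C^q are matrices complex^'a^'a; entry (r,c) is the
  coefficient of |r><c|.\<close>

definition ftr :: "nat \<Rightarrow> nat \<Rightarrow> 'a::{finite,field} \<Rightarrow> 'a::{finite,field}" where
  "ftr p m \<alpha> = (\<Sum>k<m. \<alpha> ^ (p ^ k))"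

definition trz :: "nat \<Rightarrow> nat \<Rightarrow> 'a::{finite,field} \<Rightarrow> int" where
  "trz p m \<alpha> = int (THE k. k < p \<and> of_nat k = ftr p m \<alpha>)"

definition omega_pow :: "nat \<Rightarrow> int \<Rightarrow> complex" where
  "omega_pow p k = exp (2 * pi * \<i> * of_int k / of_nat p)"

definition Xop :: "'a::{finite,field} \<Rightarrow> complex^'a::{finite,field}^'a::{finite,field}" where
  "Xop \<alpha> = (\<chi> r c. if r = c + \<alpha> then 1 else 0)"

definition Zop :: "nat \<Rightarrow> nat \<Rightarrow> 'a::{finite,field} \<Rightarrow> complex^'a::{finite,field}^'a::{finite,field}" where
  "Zop p m \<beta> = (\<chi> r c. if r = c then omega_pow p (trz p m (\<beta> * r)) else 0)"

definition Mop :: "'a::{finite,field} \<Rightarrow> complex^'a::{finite,field}^'a::{finite,field}" where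
  "Mop \<gamma> = (\<chi> r c. if r = \<gamma> * c then 1 else 0)"

definition Fop :: "nat \<Rightarrow> nat \<Rightarrow> complex^'a::{finite,field}^'a::{finite,field}" where
  "Fop p m = (\<chi> r c. omega_pow p (trz p m (c * r)) / complex_of_real (sqrt (real CARD('a::{finite,field}))))"

definition Pop_odd :: "nat \<Rightarrow> nat \<Rightarrow> 'a::{finite,field} \<Rightarrow> complex^'a::{finite,field}^'a::{finite,field}" where
  "Pop_odd p m \<gamma> = (\<chi> r c. if r = c then omega_pow p (- trz p m (\<gamma> * r ^ 2 / 2)) else 0)"

text \<open>For q = 2^m: weight w.r.t. the self-dual basis b_0,...,b_(m-1).\<close>
definition wgt :: "nat \<Rightarrow> nat \<Rightarrow> (nat \<Rightarrow> 'a::{finite,field}) \<Rightarrow> 'a::{finite,field} \<Rightarrow> nat" where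
  "wgt p m b y = card {j. j < m \<and> ftr p m (y * b j) \<noteq> 0}"

definition P1_even :: "nat \<Rightarrow> nat \<Rightarrow> (nat \<Rightarrow> 'a::{finite,field}) \<Rightarrow> complex^'a::{finite,field}^'a::{finite,field}" where
  "P1_even p m b = (\<chi> r c. if r = c then (- \<i>) ^ wgt p m b r else 0)"

definition Pop_even :: "nat \<Rightarrow> nat \<Rightarrow> (nat \<Rightarrow> 'a::{finite,field}) \<Rightarrow> 'a::{finite,field} \<Rightarrow> complex^'a::{finite,field}^'a::{finite,field}" where
  "Pop_even p m b \<gamma> =
     (let \<gamma>0 = (SOME g. g ^ 2 = \<gamma>) in matrix_inv (Mop \<gamma>0) ** P1_even p m b ** Mop \<gamma>0)"

definition Pop :: "nat \<Rightarrow> nat \<Rightarrow> (nat \<Rightarrow> 'a::{finite,field}) \<Rightarrow> 'a::{finite,field} \<Rightarrow> complex^'a::{finite,field}^'a::{finite,field}" where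
  "Pop p m b \<gamma> = (if p = 2 then Pop_even p m b \<gamma> else Pop_odd p m \<gamma>)"

definition self_dual_basis :: "nat \<Rightarrow> nat \<Rightarrow> (nat \<Rightarrow> 'a::{finite,field}) \<Rightarrow> bool" where
  "self_dual_basis p m b \<longleftrightarrow>
     (\<forall>i<m. \<forall>j<m. ftr p m (b i * b j) = (if i = j then 1 else 0))"

inductive_set Jgrp :: "nat \<Rightarrow> nat \<Rightarrow> (nat \<Rightarrow> 'a::{finite,field}) \<Rightarrow> (complex^'a::{finite,field}^'a::{finite,field}) set"
  for p m b where
  J_one: "mat 1 \<in> Jgrp p m b"
| J_F: "Fop p m \<in> Jgrp p m b"
| J_P: "\<gamma> \<noteq> 0 \<Longrightarrow> Pop p m b \<gamma> \<in> Jgrp p m b"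
| J_M: "\<gamma> \<noteq> 0 \<Longrightarrow> Mop \<gamma> \<in> Jgrp p m b"
| J_mult: "U \<in> Jgrp p m b \<Longrightarrow> V \<in> Jgrp p m b \<Longrightarrow> U ** V \<in> Jgrp p m b"
| J_inv: "U \<in> Jgrp p m b \<Longrightarrow> matrix_inv U \<in> Jgrp p m b"

end

theory Submission
  imports Defs "HOL-Computational_Algebra.Polynomial" "HOL-Computational_Algebra.Primes"
    "HOL-Number_Theory.Cong"
begin

text \<open>
  Conjugation by a generator of \<open>J\<close> sends \<open>X\<^sub>\<alpha>Z\<^sub>\<beta>\<close> to a multiple of another
  \<open>X\<^sub>\<alpha>\<^sub>'Z\<^sub>\<beta>\<^sub>'\<close>, i.e. acts on the labels \<open>(\<alpha>, \<beta>)\<close>: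
  \<open>F\<close> gives \<open>(\<beta>, -\<alpha>)\<close>, \<open>M\<^sub>\<gamma>\<close> gives \<open>(\<alpha>/\<gamma>, \<beta>\<gamma>)\<close>, and for odd \<open>q\<close>
  \<open>P\<^sub>\<gamma>\<close> gives \<open>(\<alpha>, \<beta> + \<gamma>\<alpha>)\<close>, while for even \<open>q\<close> already \<open>P\<^sub>1\<close> gives
  \<open>(\<alpha>, \<beta> + \<alpha>)\<close>. These moves join every nonzero label to \<open>(1, 0)\<close>: \<open>F\<close> makes
  \<open>\<alpha> \<noteq> 0\<close>; for odd \<open>q\<close>, \<open>P\<^bsub>-\<beta>/\<alpha>\<^esub>\<close> then clears \<open>\<beta>\<close> and \<open>M\<^sub>\<alpha>\<close>
  normalises \<open>\<alpha>\<close>; for even \<open>q\<close>, every element is a square, say \<open>\<alpha>\<beta> = g\<^sup>2\<close>, and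
  \<open>(\<alpha>, \<beta>) \<mapsto> (1, g\<^sup>2) \<mapsto> (g, g) \<mapsto> (g, 0) \<mapsto> (1, 0)\<close>.
  The phases come from the additive character \<open>\<chi>(x) = \<omega>\<^bsup>tr(x)\<^esup>\<close>, a nontrivial
  homomorphism; for even \<open>q\<close> also \<open>tr(xy) = |supp x \<inter> supp y| mod 2\<close>, where \<open>supp\<close> is
  the set of nonzero coordinates in the self-dual basis.
\<close>

section \<open>Finite fields, roots of unity and additive characters\<close>

text \<open>The library version \<open>finite_field_power_card_eq_same\<close> requires the sort \<open>finite_field\<close>,
  which a type variable of sort \<open>{finite,field}\<close> does not have.\<close>

lemma power_card_eq_self:
  fixes x :: "'a::{finite,field}"
  shows "x ^ CARD('a) = x"
proof (cases "x = 0")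
  case False
  define U where "U = UNIV - {0::'a}"
  have "(\<Prod>y\<in>U. x * y) = (\<Prod>y\<in>U. y)"
    using False by (intro prod.reindex_bij_witness[of _ "\<lambda>y. y / x" "\<lambda>y. x * y"]) (auto simp: U_def)
  then have "x ^ card U * \<Prod>U = \<Prod>U"
    by (simp add: prod.distrib)
  moreover have "\<Prod>U \<noteq> 0"
    by (simp add: U_def)
  ultimately have "x ^ card U = 1"
    by simp
  moreover have "CARD('a) = Suc (card U)"
    unfolding U_def using finite_UNIV_card_ge_0[where 'a='a] by (simp add: card_Diff_singleton)
  ultimately show ?thesis
    by simp
qed (simp add: finite_UNIV_card_ge_0)

lemma omega_pow_add: "omega_pow p (k + l) = omega_pow p k * omega_pow p l"
  unfolding omega_pow_def by (simp add: exp_add[symmetric] add_divide_distrib ring_distribs)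

lemma omega_pow_eq_1_iff:
  assumes "p > 0"
  shows "omega_pow p k = 1 \<longleftrightarrow> int p dvd k"
proof -
  have angle_iff: "2 * pi * of_int k / real p = of_int (2 * n) * pi \<longleftrightarrow> k = int p * n" for n :: int
  proof -
    have "2 * pi * of_int k / real p = of_int (2 * n) * pi \<longleftrightarrow> real_of_int k = real p * of_int n"
      using assms pi_gt_zero by (auto simp: field_simps)
    also have "\<dots> \<longleftrightarrow> k = int p * n"
      by (metis of_int_eq_iff of_int_mult of_int_of_nat_eq)
    finally show ?thesis .
  qed
  have "omega_pow p k = 1 \<longleftrightarrow> (\<exists>n::int. 2 * pi * of_int k / real p = of_int (2 * n) * pi)"
    unfolding omega_pow_def exp_eq_1 by simp
  then show ?thesis
    unfolding angle_iff by (auto simp: dvd_def)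
qed

lemma omega_pow_cong:
  assumes "[k = l] (mod int p)"
  shows "omega_pow p k = omega_pow p l"
proof (cases "p = 0")
  case False
  then have "omega_pow p (k - l) = 1"
    using assms by (simp add: omega_pow_eq_1_iff cong_iff_dvd_diff)
  then show ?thesis
    using omega_pow_add[of p l "k - l"] by simp
qed (use assms in \<open>simp add: cong_def\<close>)

lemma omega_pow_2: "omega_pow 2 (int k) = (-1) ^ k"
proof -
  have "omega_pow 2 (int k) = exp (of_nat k * (of_real pi * \<i>))"
    unfolding omega_pow_def by (simp add: mult_ac)
  then show ?thesis
    by (simp only: exp_of_nat_mult exp_pi_i)
qed

lemma sum_additive_character_eq_0:
  fixes \<psi> :: "'a::{finite,ab_group_add} \<Rightarrow> 'b::idom"
  assumes hom: "\<And>x y. \<psi> (x + y) = \<psi> x * \<psi> y" and "\<psi> y \<noteq> 1"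
  shows "(\<Sum>x\<in>UNIV. \<psi> x) = 0"
proof -
  have "(\<Sum>x\<in>UNIV. \<psi> x) = (\<Sum>x\<in>UNIV. \<psi> (x + y))"
    by (rule sum.reindex_bij_witness[of _ "\<lambda>x. x + y" "\<lambda>x. x - y"]) auto
  also have "\<dots> = \<psi> y * (\<Sum>x\<in>UNIV. \<psi> x)"
    by (simp add: hom sum_distrib_left mult.commute)
  finally have "(1 - \<psi> y) * (\<Sum>x\<in>UNIV. \<psi> x) = 0"
    by (simp add: algebra_simps)
  then show ?thesis
    using assms(2) by simp
qed

lemma power_i_card_symdiff:
  assumes "finite S" "finite A"
  shows "(- \<i>) ^ card S = \<i> ^ card A * (- \<i>) ^ card ((S - A) \<union> (A - S)) * (-1) ^ card (A \<inter> S)"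
proof -
  define x y k where "x = card (S - A)" and "y = card (A - S)" and "k = card (A \<inter> S)"
  have "card S = x + k" "card A = y + k"
    unfolding x_def y_def k_def using assms card_Int_Diff[of S A] card_Int_Diff[of A S]
    by (simp_all add: Int_commute)
  moreover have "card ((S - A) \<union> (A - S)) = x + y"
    unfolding x_def y_def using assms by (subst card_Un_disjoint) auto
  moreover have "\<i> ^ y * (- \<i>) ^ y = 1" "\<i> ^ k * (-1) ^ k = (- \<i>) ^ k"
    by (simp_all flip: power_mult_distrib)
  ultimately show ?thesis
    unfolding k_def[symmetric] by (simp add: power_add mult_ac)
qed

lemma matrix_mul_entry_single:
  fixes A :: "'a::semiring_1^'m^'n" and B :: "'a^'p^'m"
  assumes "\<And>j. j \<noteq> k \<Longrightarrow> A $ r $ j * B $ j $ s = 0"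
  shows "(A ** B) $ r $ s = A $ r $ k * B $ k $ s"
proof -
  have "(A ** B) $ r $ s = (\<Sum>j\<in>UNIV. A $ r $ j * B $ j $ s)"
    by (simp add: matrix_matrix_mult_def)
  also have "\<dots> = (\<Sum>j\<in>{k}. A $ r $ j * B $ j $ s)"
    using assms by (intro sum.mono_neutral_right) auto
  finally show ?thesis
    by simp
qed

lemma mat_mul_entry: "(mat c ** A) $ r $ s = c * (A $ r $ s :: 'a::semiring_1)"
  by (subst matrix_mul_entry_single[where k = r]) (auto simp: mat_def)

lemma mul_mat_entry: "(A ** mat c) $ r $ s = (A $ r $ s :: 'a::semiring_1) * c"
  by (subst matrix_mul_entry_single[where k = s]) (auto simp: mat_def)

lemma mat_mul_commute: "(A :: 'a::comm_semiring_1^'n^'n) ** mat c = mat c ** A"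
  by (simp add: vec_eq_iff mat_mul_entry mul_mat_entry mult.commute)

lemma matrix_mul_left_commute_mat:
  "(A :: 'a::comm_semiring_1^'n^'n) ** (mat c ** B) = mat c ** (A ** B)"
  by (metis mat_mul_commute matrix_mul_assoc)

lemma mat_mul_mat: "mat c ** mat d = (mat (c * d) :: 'a::semiring_1^'n^'n)"
  by (simp add: vec_eq_iff mat_mul_entry) (simp add: mat_def)

lemma matrix_inv_left: "invertible A \<Longrightarrow> matrix_inv A ** A = mat 1"
  and matrix_inv_right: "invertible A \<Longrightarrow> A ** matrix_inv A = mat 1"
  unfolding invertible_def matrix_inv_def by (metis (mono_tags, lifting) someI_ex)+

lemma invertible_matrix_inv: "invertible A \<Longrightarrow> invertible (matrix_inv A)"
  using matrix_inv_left matrix_inv_right unfolding invertible_def by blast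

lemma matrix_inv_mat_1: "matrix_inv (mat 1 :: 'a::semiring_1^'n^'n) = mat 1"
proof -
  have "invertible (mat 1 :: 'a^'n^'n)"
    unfolding invertible_def by (intro exI[of _ "mat 1"]) simp
  then show ?thesis
    using matrix_inv_right[of "mat 1 :: 'a^'n^'n"] by simp
qed

lemma invertible_diagonal:
  fixes D :: "'a::field^'n^'n"
  assumes "\<And>i j. i \<noteq> j \<Longrightarrow> D $ i $ j = 0" and "\<And>i. D $ i $ i \<noteq> 0"
  shows "invertible D"
proof -
  define E :: "'a^'n^'n" where "E = (\<chi> i j. if i = j then inverse (D $ i $ i) else 0)"
  have "(D ** E) $ i $ j = mat 1 $ i $ j" for i j
    by (subst matrix_mul_entry_single[where k = i]) (use assms in \<open>auto simp: E_def mat_def\<close>)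
  then have "D ** E = mat 1"
    by (simp add: vec_eq_iff)
  then show ?thesis
    by (auto simp: invertible_right_inverse)
qed

section \<open>The trace of a finite field and its additive character\<close>

locale finite_field_trace =
  fixes p m :: nat
  assumes prime_p: "prime p"
    and card_field: "CARD('a::{finite,field}) = p ^ m"
    and of_nat_p: "of_nat p = (0::'a)"
begin

lemma p_gt_1: "p > 1"
  using prime_p prime_gt_1_nat by blast

lemma CHAR_field: "CHAR('a) = p"
proof -
  have "CHAR('a) dvd p"
    using of_nat_p of_nat_eq_0_iff_char_dvd by blast
  then show ?thesis
    using prime_p CHAR_not_1 by (metis One_nat_def prime_nat_iff)
qed

lemma of_nat_inj_below_p: "i < p \<Longrightarrow> j < p \<Longrightarrow> (of_nat i :: 'a) = of_nat j \<Longrightarrow> i = j"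
  by (simp add: of_nat_eq_iff_cong_CHAR CHAR_field cong_less_modulus_unique_nat)

lemma frobenius_add: "(x + y :: 'a) ^ (p ^ k) = x ^ (p ^ k) + y ^ (p ^ k)"
  by (rule freshmans_dream'[where n = k]) (simp_all add: CHAR_field prime_p)

lemma frobenius_sum: "(sum f A :: 'a) ^ (p ^ k) = (\<Sum>i\<in>A. f i ^ (p ^ k))"
  by (rule freshmans_dream_sum'[where n = k]) (simp_all add: CHAR_field prime_p)

lemma ftr_add: "ftr p m (x + y :: 'a) = ftr p m x + ftr p m y"
  unfolding ftr_def by (simp add: frobenius_add sum.distrib)

lemma ftr_sum: "ftr p m (sum f A :: 'a) = (\<Sum>i\<in>A. ftr p m (f i))"
  unfolding ftr_def frobenius_sum by (rule sum.swap)

lemma ftr_power_p: "ftr p m (x::'a) ^ p = ftr p m x"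
proof -
  have "ftr p m x ^ p = (\<Sum>k<m. (x ^ (p ^ k)) ^ p)"
    unfolding ftr_def using frobenius_sum[of "\<lambda>k. x ^ (p ^ k)" "{..<m}" 1] by simp
  also have "\<dots> = (\<Sum>k<m. x ^ (p ^ Suc k))"
    by (simp add: power_mult[symmetric] mult.commute)
  also have "\<dots> = (\<Sum>k<m. x ^ (p ^ k))"
  proof -
    have "x ^ (p ^ 0) + (\<Sum>k<m. x ^ (p ^ Suc k)) = (\<Sum>k<Suc m. x ^ (p ^ k))"
      by (rule sum.lessThan_Suc_shift[symmetric])
    also have "\<dots> = (\<Sum>k<m. x ^ (p ^ k)) + x ^ (p ^ 0)"
      using power_card_eq_self[of x] by (simp add: card_field)
    finally show ?thesis
      by simp
  qed
  finally show ?thesis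
    unfolding ftr_def .
qed

text \<open>The \<open>p\<close> elements of the prime field already exhaust the roots of \<open>X\<^sup>p - X\<close>.\<close>

lemma fixed_by_power_p_imp_of_nat:
  assumes "(y::'a) ^ p = y"
  shows "\<exists>k<p. of_nat k = y"
proof (rule ccontr)
  assume not_of_nat: "\<not> (\<exists>k<p. of_nat k = y)"
  define P :: "'a poly" where "P = monom 1 p - [:0, 1:]"
  have "coeff P p = 1"
    using p_gt_1 by (simp add: P_def coeff_monom coeff_pCons split: nat.split)
  then have "P \<noteq> 0"
    by auto
  have "degree P \<le> p"
    unfolding P_def using p_gt_1 by (intro degree_diff_le) (auto simp: degree_monom_eq)
  have of_nat_power_p: "(of_nat k :: 'a) ^ p = of_nat k" for k
  proof (induction k)
    case (Suc k)
    then show ?case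
      using frobenius_add[of 1 "of_nat k" 1] by simp
  qed (use p_gt_1 in simp)
  have "insert y (of_nat ` {..<p}) \<subseteq> {x. poly P x = 0}"
    using assms by (auto simp: P_def poly_monom of_nat_power_p)
  moreover have "inj_on (of_nat :: nat \<Rightarrow> 'a) {..<p}"
    by (auto intro!: inj_onI of_nat_inj_below_p)
  then have "card (insert y ((of_nat :: nat \<Rightarrow> 'a) ` {..<p})) = Suc p"
    using not_of_nat by (subst card_insert_disjoint) (auto simp: card_image)
  ultimately have "Suc p \<le> card {x. poly P x = 0}"
    by (metis card_mono poly_roots_finite[OF \<open>P \<noteq> 0\<close>])
  then show False
    using card_poly_roots_bound[OF \<open>P \<noteq> 0\<close>] \<open>degree P \<le> p\<close> by linarith
qed

lemma of_int_trz: "of_int (trz p m x) = ftr p m (x::'a)"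
proof -
  have "\<exists>!k. k < p \<and> of_nat k = ftr p m x"
    using fixed_by_power_p_imp_of_nat[OF ftr_power_p] of_nat_inj_below_p by metis
  then show ?thesis
    unfolding trz_def by (metis (mono_tags, lifting) of_int_of_nat_eq theI')
qed

lemma ftr_not_identically_0: "\<exists>y::'a. ftr p m y \<noteq> 0"
proof (rule ccontr)
  assume "\<not> (\<exists>y::'a. ftr p m y \<noteq> 0)"
  define P :: "'a poly" where "P = (\<Sum>k<m. monom 1 (p ^ k))"
  have roots: "{x. poly P x = 0} = UNIV"
    using \<open>\<not> (\<exists>y. ftr p m y \<noteq> 0)\<close> by (auto simp: P_def poly_sum poly_monom ftr_def)
  have "card {0::'a, 1} \<le> CARD('a)"
    by (rule card_mono) auto
  then have "m > 0"
    using card_field by (cases m) auto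
  have "coeff P (p ^ (m - 1)) = (\<Sum>k<m. if k = m - 1 then 1 else 0)"
    unfolding P_def coeff_sum coeff_monom using p_gt_1 by (intro sum.cong) (auto simp: power_inject_exp)
  also have "\<dots> = 1"
    using \<open>m > 0\<close> by simp
  finally have "P \<noteq> 0"
    by auto
  have "degree P \<le> p ^ (m - 1)"
    unfolding P_def using p_gt_1
    by (intro degree_sum_le) (auto simp: degree_monom_eq intro!: power_increasing)
  then have "CARD('a) \<le> p ^ (m - 1)"
    using card_poly_roots_bound[OF \<open>P \<noteq> 0\<close>] roots by simp
  moreover have "p ^ (m - 1) < p ^ m"
    using p_gt_1 \<open>m > 0\<close> by (intro power_strict_increasing) auto
  ultimately show False
    using card_field by simp
qed

definition chi :: "'a \<Rightarrow> complex" where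
  "chi x = omega_pow p (trz p m x)"

lemma chi_add: "chi (x + y) = chi x * chi y"
proof -
  have "of_int (trz p m (x + y)) = (of_int (trz p m x + trz p m y) :: 'a)"
    by (simp add: of_int_trz ftr_add)
  then have "[trz p m (x + y) = trz p m x + trz p m y] (mod int p)"
    by (simp only: of_int_eq_iff_cong_CHAR CHAR_field)
  then show ?thesis
    unfolding chi_def by (simp add: omega_pow_cong omega_pow_add)
qed

lemma chi_nonzero: "chi x \<noteq> 0"
  by (simp add: chi_def omega_pow_def)

lemma chi_0: "chi 0 = 1"
  using chi_add[of 0 0] chi_nonzero[of 0] by simp

lemma chi_nontrivial: "\<exists>y. chi y \<noteq> 1"
proof -
  obtain y :: 'a where "ftr p m y \<noteq> 0"
    using ftr_not_identically_0 by blast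
  then have "\<not> int p dvd trz p m y"
    using of_int_trz[of y] by (metis CHAR_field of_int_eq_0_iff_char_dvd)
  then have "chi y \<noteq> 1"
    using prime_p by (simp add: chi_def omega_pow_eq_1_iff prime_gt_0_nat)
  then show ?thesis ..
qed

lemma sum_chi_mult_eq_0:
  assumes "d \<noteq> 0"
  shows "(\<Sum>x\<in>UNIV. chi (x * d)) = 0"
proof -
  obtain y where "chi y \<noteq> 1"
    using chi_nontrivial by blast
  then show ?thesis
    using assms by (intro sum_additive_character_eq_0[of "\<lambda>x. chi (x * d)" "y / d"])
      (simp_all add: chi_add ring_distribs)
qed

section \<open>Conjugating Weyl operators by \<open>J\<close>\<close>

definition weyl :: "'a \<times> 'a \<Rightarrow> complex^'a::{finite,field}^'a::{finite,field}" where
  "weyl u = Xop (fst u) ** Zop p m (snd u)"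

lemma weyl_entry: "weyl (a, c) $ r $ s = (if r = s + a then chi (c * s) else 0)"
  unfolding weyl_def fst_conv snd_conv
  by (subst matrix_mul_entry_single[where k = s]) (auto simp: Xop_def Zop_def chi_def)

text \<open>Stated without \<open>matrix_inv\<close>, so that transitivity needs no formula for the inverse
  of a product.\<close>

definition J_conj :: "(nat \<Rightarrow> 'a) \<Rightarrow> 'a \<times> 'a \<Rightarrow> 'a \<times> 'a \<Rightarrow> bool" where
  "J_conj b u v \<longleftrightarrow>
     (\<exists>U\<in>Jgrp p m b. invertible U \<and> (\<exists>c. c \<noteq> 0 \<and> weyl u ** U = mat c ** (U ** weyl v)))"

lemma J_conjI:
  assumes "U \<in> Jgrp p m b" "invertible U" "c \<noteq> 0"
    and "\<And>r s. (weyl u ** U) $ r $ s = c * (U ** weyl v) $ r $ s"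
  shows "J_conj b u v"
proof -
  have "weyl u ** U = mat c ** (U ** weyl v)"
    using assms(4) by (simp add: vec_eq_iff mat_mul_entry)
  then show ?thesis
    unfolding J_conj_def using assms(1-3) by blast
qed

lemma J_conj_trans:
  assumes "J_conj b u v" and "J_conj b v w"
  shows "J_conj b u w"
proof -
  obtain U c where U: "U \<in> Jgrp p m b" "invertible U" "c \<noteq> 0"
    and U_conj: "weyl u ** U = mat c ** (U ** weyl v)"
    using assms(1) unfolding J_conj_def by blast
  obtain V d where V: "V \<in> Jgrp p m b" "invertible V" "d \<noteq> 0"
    and V_conj: "weyl v ** V = mat d ** (V ** weyl w)"
    using assms(2) unfolding J_conj_def by blast
  have "weyl u ** (U ** V) = (weyl u ** U) ** V"
    by (simp only: matrix_mul_assoc)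
  also have "\<dots> = mat c ** (U ** (weyl v ** V))"
    by (simp only: U_conj matrix_mul_assoc)
  also have "\<dots> = mat c ** (U ** (mat d ** (V ** weyl w)))"
    by (simp only: V_conj)
  also have "\<dots> = mat c ** (mat d ** (U ** (V ** weyl w)))"
    by (simp only: matrix_mul_left_commute_mat[of U])
  also have "\<dots> = mat (c * d) ** ((U ** V) ** weyl w)"
    by (simp only: matrix_mul_assoc mat_mul_mat)
  finally show ?thesis
    unfolding J_conj_def using U V
    by (intro bexI[of _ "U ** V"] conjI exI[of _ "c * d"]) (auto intro: Jgrp.J_mult invertible_mult)
qed

lemma J_conj_sym:
  assumes "J_conj b u v"
  shows "J_conj b v u"
proof -
  obtain U c where U: "U \<in> Jgrp p m b" "invertible U" "c \<noteq> 0"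
    and U_conj: "weyl u ** U = mat c ** (U ** weyl v)"
    using assms unfolding J_conj_def by blast
  define V where "V = matrix_inv U"
  have VU: "V ** U = mat 1" and UV: "U ** V = mat 1"
    unfolding V_def using U(2) by (simp_all add: matrix_inv_left matrix_inv_right)
  have "V ** weyl u = V ** (weyl u ** U) ** V"
    by (simp add: UV flip: matrix_mul_assoc)
  also have "\<dots> = mat c ** (V ** (U ** weyl v)) ** V"
    by (simp only: U_conj matrix_mul_left_commute_mat[of V])
  also have "\<dots> = mat c ** ((V ** U) ** (weyl v ** V))"
    by (simp only: matrix_mul_assoc)
  finally have "V ** weyl u = mat c ** (weyl v ** V)"
    by (simp add: VU)
  then have "weyl v ** V = mat (1 / c) ** (V ** weyl u)"
    using U(3) by (simp add: matrix_mul_assoc mat_mul_mat)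
  then show ?thesis
    unfolding J_conj_def using U(1-3)
    by (intro bexI[of _ V] conjI exI[of _ "1 / c"])
      (auto simp: V_def intro: Jgrp.J_inv invertible_matrix_inv)
qed

lemma J_conj_imp_conjugate:
  assumes "J_conj b u v"
  shows "\<exists>U\<in>Jgrp p m b. \<exists>c. matrix_inv U ** weyl u ** U = mat c ** weyl v"
proof -
  obtain U c where U: "U \<in> Jgrp p m b" "invertible U"
    and U_conj: "weyl u ** U = mat c ** (U ** weyl v)"
    using assms unfolding J_conj_def by blast
  have "matrix_inv U ** weyl u ** U = mat c ** ((matrix_inv U ** U) ** weyl v)"
    by (simp only: U_conj matrix_mul_left_commute_mat[of "matrix_inv U"] flip: matrix_mul_assoc)
  also have "\<dots> = mat c ** weyl v"
    using U(2) by (simp add: matrix_inv_left)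
  finally show ?thesis
    using U(1) by blast
qed

lemma Mop_mult: "Mop g ** Mop h = Mop (g * h)"
proof -
  have "(Mop g ** Mop h) $ r $ s = Mop (g * h) $ r $ s" for r s
    by (subst matrix_mul_entry_single[where k = "h * s"]) (auto simp: Mop_def mult.assoc)
  then show ?thesis
    by (simp add: vec_eq_iff)
qed

lemma Mop_1: "Mop 1 = mat 1"
  by (simp add: Mop_def mat_def)

lemma invertible_Mop: "g \<noteq> 0 \<Longrightarrow> invertible (Mop g)"
  using Mop_mult[of g "inverse g"] by (auto simp: Mop_1 invertible_right_inverse)

lemma J_conj_M:
  assumes "g \<noteq> 0"
  shows "J_conj b (a, c) (a / g, c * g)"
proof (rule J_conjI[OF Jgrp.J_M[OF assms] invertible_Mop[OF assms] one_neq_zero])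
  fix r s
  have "(weyl (a, c) ** Mop g) $ r $ s = weyl (a, c) $ r $ (g * s)"
    by (subst matrix_mul_entry_single[where k = "g * s"]) (auto simp: Mop_def)
  moreover have "(Mop g ** weyl (a / g, c * g)) $ r $ s = weyl (a / g, c * g) $ (r / g) $ s"
    using assms by (subst matrix_mul_entry_single[where k = "r / g"]) (auto simp: Mop_def)
  moreover have "r = g * s + a \<longleftrightarrow> r / g = s + a / g"
    using assms by (auto simp: field_simps)
  ultimately show "(weyl (a, c) ** Mop g) $ r $ s = 1 * (Mop g ** weyl (a / g, c * g)) $ r $ s"
    by (simp add: weyl_entry mult_ac)
qed

lemma Fop_entry: "Fop p m $ r $ s = chi (s * r) / of_real (sqrt CARD('a))"
  by (simp add: Fop_def chi_def)

lemma invertible_Fop: "invertible (Fop p m :: complex^'a::{finite,field}^'a::{finite,field})"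
proof -
  define F' :: "complex^'a::{finite,field}^'a::{finite,field}"
    where "F' = (\<chi> r s. chi (- (s * r)) / of_real (sqrt CARD('a)))"
  have "(Fop p m ** F') $ r $ s = mat 1 $ r $ s" for r s :: 'a
  proof -
    have "chi (k * r) * chi (- (s * k)) = chi (k * (r - s))" for k
      by (simp add: chi_add[symmetric] algebra_simps)
    then have "Fop p m $ r $ k * F' $ k $ s = chi (k * (r - s)) / of_nat CARD('a)" for k
      by (simp add: Fop_entry F'_def flip: of_real_mult)
    then have "(Fop p m ** F') $ r $ s = (\<Sum>k\<in>UNIV. chi (k * (r - s))) / of_nat CARD('a)"
      by (simp add: matrix_matrix_mult_def sum_divide_distrib)
    also have "\<dots> = mat 1 $ r $ s"
      by (cases "r = s") (simp_all add: chi_0 mat_def sum_chi_mult_eq_0)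
    finally show ?thesis .
  qed
  then show ?thesis
    by (auto simp: vec_eq_iff invertible_right_inverse)
qed

lemma J_conj_F: "J_conj b (a, c) (c, - a)"
proof (rule J_conjI[OF Jgrp.J_F invertible_Fop chi_nonzero[of "- (a * c)"]])
  fix r s
  have "(weyl (a, c) ** Fop p m) $ r $ s
      = chi (c * (r - a)) * chi (s * (r - a)) / of_real (sqrt CARD('a))"
    by (subst matrix_mul_entry_single[where k = "r - a"]) (auto simp: weyl_entry Fop_entry)
  moreover have "(Fop p m ** weyl (c, - a)) $ r $ s
      = chi ((s + c) * r) * chi (- a * s) / of_real (sqrt CARD('a))"
    by (subst matrix_mul_entry_single[where k = "s + c"]) (auto simp: weyl_entry Fop_entry)
  moreover have "chi (c * (r - a)) * chi (s * (r - a))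
      = chi (- (a * c)) * (chi ((s + c) * r) * chi (- a * s))"
    by (simp add: chi_add[symmetric] algebra_simps)
  ultimately show "(weyl (a, c) ** Fop p m) $ r $ s
      = chi (- (a * c)) * (Fop p m ** weyl (c, - a)) $ r $ s"
    by simp
qed

lemma two_nonzero:
  assumes "p \<noteq> 2"
  shows "(2::'a) \<noteq> 0"
proof
  assume "(2::'a) = 0"
  then have "p dvd 2"
    using of_nat_eq_0_iff_char_dvd[where 'a = 'a, of 2] by (simp add: CHAR_field)
  then show False
    using assms prime_p by (metis primes_dvd_imp_eq two_is_prime_nat)
qed

lemma Pop_odd_entry:
  "Pop_odd p m g $ r $ s = (if r = s then inverse (chi (g * r ^ 2 / 2)) else 0)"
  by (simp add: Pop_odd_def chi_def omega_pow_def exp_minus)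

lemma J_conj_P_odd:
  assumes "p \<noteq> 2" "g \<noteq> 0"
  shows "J_conj b (a, c) (a, c + g * a)"
proof (rule J_conjI[OF _ _ chi_nonzero[of "g * a ^ 2 / 2"]])
  show "Pop_odd p m g \<in> Jgrp p m b"
    using Jgrp.J_P[OF assms(2), of p m b] assms(1) by (simp add: Pop_def)
  show "invertible (Pop_odd p m g)"
    by (rule invertible_diagonal) (simp_all add: Pop_odd_entry chi_nonzero)
  fix r s
  have L: "(weyl (a, c) ** Pop_odd p m g) $ r $ s
      = (if r = s + a then chi (c * s) * inverse (chi (g * s ^ 2 / 2)) else 0)"
    by (subst matrix_mul_entry_single[where k = s]) (auto simp: Pop_odd_entry weyl_entry)
  have R: "(Pop_odd p m g ** weyl (a, c + g * a)) $ r $ s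
      = (if r = s + a then inverse (chi (g * (s + a) ^ 2 / 2)) * chi ((c + g * a) * s) else 0)"
    by (subst matrix_mul_entry_single[where k = r]) (auto simp: Pop_odd_entry weyl_entry)
  have "chi (g * (s + a) ^ 2 / 2) = chi (g * s ^ 2 / 2) * chi (g * a * s) * chi (g * a ^ 2 / 2)"
    using two_nonzero[OF assms(1)]
    by (simp add: chi_add[symmetric] field_simps power2_eq_square)
  then have "chi (c * s) * inverse (chi (g * s ^ 2 / 2))
      = chi (g * a ^ 2 / 2) * (inverse (chi (g * (s + a) ^ 2 / 2)) * chi ((c + g * a) * s))"
    by (simp add: chi_add ring_distribs chi_nonzero field_simps)
  then show "(weyl (a, c) ** Pop_odd p m g) $ r $ s
      = chi (g * a ^ 2 / 2) * (Pop_odd p m g ** weyl (a, c + g * a)) $ r $ s"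
    unfolding L R by simp
qed

lemma J_conj_odd_to_1_0:
  assumes "p \<noteq> 2" "a \<noteq> 0"
  shows "J_conj b (a, c) (1, 0)"
proof -
  have to_1_0: "J_conj b (a, 0) (1, 0)"
    using J_conj_M[OF assms(2), of b a 0] assms(2) by simp
  show ?thesis
  proof (cases "c = 0")
    case False
    then have "J_conj b (a, c) (a, c + (- c / a) * a)"
      using assms by (intro J_conj_P_odd) auto
    then show ?thesis
      using assms(2) J_conj_trans[OF _ to_1_0] by simp
  qed (use to_1_0 in simp)
qed

section \<open>Characteristic two\<close>

lemma invertible_P1_even: "invertible (P1_even p m b)"
  by (rule invertible_diagonal) (simp_all add: P1_even_def)

context
  assumes p_eq_2: "p = 2"
begin

lemma CHAR_2: "CHAR('a) = 2"
  using CHAR_field p_eq_2 by simp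

lemma ftr_eq_0_or_1: "ftr p m (x::'a) = 0 \<or> ftr p m x = 1"
  using ftr_power_p[of x] p_eq_2 by (simp add: power2_eq_square)

lemma power2_inj_char_2: "(x::'a) ^ 2 = z ^ 2 \<Longrightarrow> x = z"
proof -
  assume "x ^ 2 = z ^ 2"
  moreover have "(x + z) ^ 2 = x ^ 2 + z ^ 2"
    using frobenius_add[of x z 1] p_eq_2 by simp
  moreover have "z ^ 2 + z ^ 2 = 0"
    using uminus_CHAR_2[OF CHAR_2, of "z ^ 2"] by (simp add: add_eq_0_iff2)
  ultimately have "x = - z"
    by (simp add: add_eq_0_iff2)
  then show "x = z"
    using uminus_CHAR_2[OF CHAR_2] by simp
qed

lemma exists_square_root: "\<exists>g. g ^ 2 = (y::'a)"
proof -
  have "inj (\<lambda>x::'a. x ^ 2)"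
    by (rule injI) (rule power2_inj_char_2)
  then have "surj (\<lambda>x::'a. x ^ 2)"
    by (simp add: finite_UNIV_inj_surj)
  then show ?thesis
    by (metis surjD)
qed

context
  fixes b :: "nat \<Rightarrow> 'a"
begin

lemma P1_even_in_J: "P1_even p m b \<in> Jgrp p m b"
proof -
  have "(SOME g::'a. g ^ 2 = 1) = 1"
    using power2_inj_char_2[of _ 1] by (intro some_equality) auto
  then have "Pop p m b 1 = P1_even p m b"
    using p_eq_2 by (simp add: Pop_def Pop_even_def Mop_1 matrix_inv_mat_1)
  then show ?thesis
    using Jgrp.J_P[of 1 p m b] by simp
qed

context
  assumes self_dual: "self_dual_basis p m b"
begin

definition basis_supp :: "'a \<Rightarrow> nat set" where
  "basis_supp s = {j. j < m \<and> ftr p m (s * b j) \<noteq> 0}"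

lemma finite_basis_supp: "finite (basis_supp s)"
  unfolding basis_supp_def by simp

lemma basis_supp_add:
  "basis_supp (s + a) = (basis_supp s - basis_supp a) \<union> (basis_supp a - basis_supp s)"
proof -
  have "(1::'a) + 1 = 0"
    using of_nat_p p_eq_2 by simp
  moreover have "ftr p m ((s + a) * b j) = ftr p m (s * b j) + ftr p m (a * b j)" for j
    by (simp add: ring_distribs ftr_add)
  ultimately have "ftr p m ((s + a) * b j) \<noteq> 0
      \<longleftrightarrow> (ftr p m (s * b j) \<noteq> 0) \<noteq> (ftr p m (a * b j) \<noteq> 0)" for j
    using ftr_eq_0_or_1[of "s * b j"] ftr_eq_0_or_1[of "a * b j"] by auto
  then show ?thesis
    unfolding basis_supp_def by auto
qed

lemma basis_supp_sum_basis:
  assumes "S \<subseteq> {..<m}"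
  shows "basis_supp (\<Sum>j\<in>S. b j) = S"
proof -
  have "finite S"
    using assms finite_subset by blast
  have "ftr p m ((\<Sum>j\<in>S. b j) * b i) = (if i \<in> S then 1 else 0)" if "i < m" for i
  proof -
    have "ftr p m ((\<Sum>j\<in>S. b j) * b i) = (\<Sum>j\<in>S. if j = i then 1 else 0)"
      using self_dual assms that unfolding self_dual_basis_def sum_distrib_right ftr_sum
      by (intro sum.cong) auto
    then show ?thesis
      using \<open>finite S\<close> by simp
  qed
  then show ?thesis
    using assms unfolding basis_supp_def by (auto split: if_splits)
qed

lemma sum_basis_supp: "(\<Sum>j\<in>basis_supp y. b j) = y"
proof -
  define f where "f S = (\<Sum>j\<in>S. b j)" for S
  have "inj_on f (Pow {..<m})"
    by (rule inj_on_inverseI[of _ basis_supp]) (auto simp: f_def basis_supp_sum_basis)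
  then have "card (f ` Pow {..<m}) = CARD('a)"
    using card_field p_eq_2 by (simp add: card_image card_Pow)
  then have "f ` Pow {..<m} = UNIV"
    by (intro card_subset_eq) auto
  then obtain S where "S \<subseteq> {..<m}" "y = f S"
    by (metis PowD UNIV_I imageE)
  then show ?thesis
    by (simp add: f_def basis_supp_sum_basis)
qed

lemma chi_mult: "chi (a * s) = (-1) ^ card (basis_supp a \<inter> basis_supp s)"
proof -
  have "a * s = s * (\<Sum>j\<in>basis_supp a. b j)"
    by (simp add: sum_basis_supp mult.commute)
  then have "ftr p m (a * s) = (\<Sum>j\<in>basis_supp a. ftr p m (s * b j))"
    by (simp add: sum_distrib_left ftr_sum)
  also have "\<dots> = (\<Sum>j\<in>basis_supp a. if j \<in> basis_supp s then 1 else 0)"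
    using ftr_eq_0_or_1 by (intro sum.cong) (auto simp: basis_supp_def)
  also have "\<dots> = of_nat (card (basis_supp a \<inter> basis_supp s))"
    using finite_basis_supp by (simp add: sum.If_cases Int_def)
  finally have
    "of_int (trz p m (a * s)) = (of_int (int (card (basis_supp a \<inter> basis_supp s))) :: 'a)"
    by (simp add: of_int_trz)
  then have "[trz p m (a * s) = int (card (basis_supp a \<inter> basis_supp s))] (mod 2)"
    by (simp only: of_int_eq_iff_cong_CHAR CHAR_2 of_nat_numeral)
  then have
    "omega_pow 2 (trz p m (a * s)) = omega_pow 2 (int (card (basis_supp a \<inter> basis_supp s)))"
    using omega_pow_cong[of _ _ 2] by simp
  moreover have "omega_pow p = omega_pow 2"
    using p_eq_2 by simp
  ultimately show ?thesis
    unfolding chi_def by (simp add: omega_pow_2)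
qed

lemma J_conj_P1: "J_conj b (a, c) (a, c + a)"
proof (rule J_conjI[OF P1_even_in_J invertible_P1_even, of "\<i> ^ card (basis_supp a)"])
  fix r s
  have L: "(weyl (a, c) ** P1_even p m b) $ r $ s
      = weyl (a, c) $ r $ s * (- \<i>) ^ card (basis_supp s)"
    by (subst matrix_mul_entry_single[where k = s]) (auto simp: P1_even_def wgt_def basis_supp_def)
  have R: "(P1_even p m b ** weyl (a, c + a)) $ r $ s
      = (- \<i>) ^ card (basis_supp r) * weyl (a, c + a) $ r $ s"
    by (subst matrix_mul_entry_single[where k = r]) (auto simp: P1_even_def wgt_def basis_supp_def)
  have "(- \<i>) ^ card (basis_supp s)
      = \<i> ^ card (basis_supp a) * (- \<i>) ^ card (basis_supp (s + a)) * chi (a * s)"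
    unfolding chi_mult basis_supp_add
    by (rule power_i_card_symdiff[OF finite_basis_supp finite_basis_supp])
  then show "(weyl (a, c) ** P1_even p m b) $ r $ s
      = \<i> ^ card (basis_supp a) * (P1_even p m b ** weyl (a, c + a)) $ r $ s"
    unfolding L R by (simp add: weyl_entry chi_add ring_distribs mult_ac)
qed simp

lemma J_conj_even_to_1_0:
  assumes "a \<noteq> 0"
  shows "J_conj b (a, c) (1, 0)"
proof -
  have to_1: "J_conj b (a, c) (1, c * a)"
    using J_conj_M[OF assms, of b a c] assms by simp
  show ?thesis
  proof (cases "c * a = 0")
    case False
    obtain g where g: "g ^ 2 = c * a"
      using exists_square_root by blast
    then have "g \<noteq> 0"
      using False by auto
    have "J_conj b (1, c * a) (g, g)"
      using J_conj_M[of "1 / g" b 1 "c * a"] \<open>g \<noteq> 0\<close> by (simp add: power2_eq_square flip: g)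
    moreover have "g + g = 0"
      by (metis add_eq_0_iff2 uminus_CHAR_2 CHAR_2)
    then have "J_conj b (g, g) (g, 0)"
      using J_conj_P1[of g g] by (simp only:)
    moreover have "J_conj b (g, 0) (1, 0)"
      using J_conj_M[OF \<open>g \<noteq> 0\<close>, of b g 0] \<open>g \<noteq> 0\<close> by simp
    ultimately show ?thesis
      using to_1 J_conj_trans by blast
  qed (use to_1 assms in simp)
qed

end

end

end

lemma J_conj_to_1_0:
  assumes "(a, c) \<noteq> (0, 0)" and "p = 2 \<Longrightarrow> self_dual_basis p m b"
  shows "J_conj b (a, c) (1, 0)"
proof -
  have nonzero_first: "J_conj b (x, y) (1, 0)" if "x \<noteq> 0" for x y
    using that assms(2) J_conj_odd_to_1_0 J_conj_even_to_1_0 by (cases "p = 2") auto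
  show ?thesis
  proof (cases "a = 0")
    case True
    then have "c \<noteq> 0"
      using assms(1) by simp
    then show ?thesis
      using J_conj_trans[OF J_conj_F nonzero_first] by blast
  qed (rule nonzero_first)
qed

end

theorem corollary1:
  fixes p m :: nat and b :: "nat \<Rightarrow> 'a::{finite,field}"
  assumes "prime p" and "CARD('a) = p ^ m" and "of_nat p = (0::'a)"
    and "p = 2 \<Longrightarrow> self_dual_basis p m b"
  shows "\<forall>\<alpha> \<beta> \<alpha>' \<beta>' :: 'a. (\<alpha>, \<beta>) \<noteq> (0, 0) \<longrightarrow> (\<alpha>', \<beta>') \<noteq> (0, 0) \<longrightarrow>
           (\<exists>U \<in> Jgrp p m b. \<exists>c :: complex.
              matrix_inv U ** (Xop \<alpha> ** Zop p m \<beta>) ** U = mat c ** (Xop \<alpha>' ** Zop p m \<beta>'))"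
proof (intro allI impI)
  interpret finite_field_trace p m
    using assms(1-3) by unfold_locales
  fix \<alpha> \<beta> \<alpha>' \<beta>' :: 'a
  assume "(\<alpha>, \<beta>) \<noteq> (0, 0)" and "(\<alpha>', \<beta>') \<noteq> (0, 0)"
  then have "J_conj b (\<alpha>, \<beta>) (1, 0)" and "J_conj b (\<alpha>', \<beta>') (1, 0)"
    using J_conj_to_1_0 assms(4) by blast+
  then have "J_conj b (\<alpha>, \<beta>) (\<alpha>', \<beta>')"
    using J_conj_sym J_conj_trans by blast
  then show "\<exists>U \<in> Jgrp p m b. \<exists>c :: complex.
      matrix_inv U ** (Xop \<alpha> ** Zop p m \<beta>) ** U = mat c ** (Xop \<alpha>' ** Zop p m \<beta>')"
    using J_conj_imp_conjugate unfolding weyl_def by auto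
qed

end
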